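(* Let $S$ be a commutative $\Gamma$-hemiring and let $\mu$ be a fuzzy subset of $S$ such that $\langle x,\mu\rangle=\mu$ for all $x\in S$. Then $\mu$ is constant.
   Context: A $\Gamma$-hemiring is a pair of additive commutative semigroups with zero $S$ and $\Gamma$ with a map $S\times\Gamma\times S\to S$, $(a,\alpha,b)\mapsto a\alpha b$, such that for all $a,b,c\in S$, $\alpha,\beta\in\Gamma$: $(a+b)\alpha c=a\alpha c+b\alpha c$; $a\alpha(b+c)=a\alpha b+a\alpha c$; $a(\alpha+\beta)b=a\alpha b+a\beta b$; $a\alpha(b\beta c)=(a\alpha b)\beta c$; $0\alpha a=0=a\alpha0$; $a0b=0=b0a$. It is commutative if $a\alpha b=b\alpha a$ for all $a,b\in S$, $\alpha\in\Gamma$. A fuzzy subset is a map $\mu:S\to[0,1]$, and its extension by $x\in S$ is $\langle x,\mu\rangle(y)=\inf_{s\in S,\ \alpha,\gamma\in\Gamma}\mu(x\alpha s\gamma y)$. *)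

theory Defs
  imports Main "HOL.Real"
begin

definition gamma_hemiring :: "('s::comm_monoid_add \<Rightarrow> 'g::comm_monoid_add \<Rightarrow> 's \<Rightarrow> 's) \<Rightarrow> bool" where
  "gamma_hemiring gm \<longleftrightarrow>
     (\<forall>a b c \<alpha>. gm (a + b) \<alpha> c = gm a \<alpha> c + gm b \<alpha> c) \<and>
     (\<forall>a b c \<alpha>. gm a \<alpha> (b + c) = gm a \<alpha> b + gm a \<alpha> c) \<and>
     (\<forall>a b \<alpha> \<beta>. gm a (\<alpha> + \<beta>) b = gm a \<alpha> b + gm a \<beta> b) \<and>
     (\<forall>a b c \<alpha> \<beta>. gm a \<alpha> (gm b \<beta> c) = gm (gm a \<alpha> b) \<beta> c) \<and>
     (\<forall>a \<alpha>. gm 0 \<alpha> a = 0 \<and> gm a \<alpha> 0 = 0) \<and>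
     (\<forall>a b. gm a 0 b = 0 \<and> gm b 0 a = 0)"

definition comm_gamma_hemiring :: "('s::comm_monoid_add \<Rightarrow> 'g::comm_monoid_add \<Rightarrow> 's \<Rightarrow> 's) \<Rightarrow> bool" where
  "comm_gamma_hemiring gm \<longleftrightarrow> gamma_hemiring gm \<and> (\<forall>a b \<alpha>. gm a \<alpha> b = gm b \<alpha> a)"

definition fuzzy_subset :: "('s \<Rightarrow> real) \<Rightarrow> bool" where
  "fuzzy_subset \<mu> \<longleftrightarrow> (\<forall>x. 0 \<le> \<mu> x \<and> \<mu> x \<le> 1)"

definition fuzzy_ext :: "('s \<Rightarrow> 'g \<Rightarrow> 's \<Rightarrow> 's) \<Rightarrow> 's \<Rightarrow> ('s \<Rightarrow> real) \<Rightarrow> 's \<Rightarrow> real" where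
  "fuzzy_ext gm x \<mu> y = Inf {\<mu> (gm (gm x \<alpha> s) \<gamma> y) | s \<alpha> \<gamma>. True}"

end

theory Submission
  imports Defs
begin

text \<open>Since 0 is absorbing, every product 0\<alpha>s\<gamma>y is 0, so the extension of \<mu> by 0 is
  the constant \<mu> 0; invariance of \<mu> under this one extension already forces \<mu> to be constant.\<close>

lemma gamma_hemiring_zero_left:
  "gamma_hemiring gm \<Longrightarrow> gm 0 \<alpha> a = 0"
  unfolding gamma_hemiring_def by blast

lemma fuzzy_ext_zero:
  assumes "gamma_hemiring gm"
  shows "fuzzy_ext gm 0 \<mu> y = \<mu> 0"
proof -
  have "{\<mu> (gm (gm 0 \<alpha> s) \<gamma> y) | s \<alpha> \<gamma>. True} = {\<mu> 0}"
    by (auto simp: gamma_hemiring_zero_left[OF assms])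
  then show ?thesis
    unfolding fuzzy_ext_def by simp
qed

theorem theorem3p24:
  fixes gm :: "'s::comm_monoid_add \<Rightarrow> 'g::comm_monoid_add \<Rightarrow> 's \<Rightarrow> 's"
    and \<mu> :: "'s \<Rightarrow> real"
  assumes "comm_gamma_hemiring gm"
    and "fuzzy_subset \<mu>"
    and "\<forall>x. fuzzy_ext gm x \<mu> = \<mu>"
  shows "\<exists>c. \<forall>y. \<mu> y = c"
proof -
  have "gamma_hemiring gm"
    using assms(1) unfolding comm_gamma_hemiring_def by simp
  then have "\<mu> y = \<mu> 0" for y
    using fuzzy_ext_zero assms(3) by metis
  then show ?thesis by blast
qed

end
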